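(* Let $r\ge1$ and let $\tau,\tau'$ be permutations of $F^r$ fixing $\mathbf 0$. (i) If $SQS_\tau$ and $SQS_{\tau'}$ are both affine, they are isomorphic. (ii) If at least one of $SQS_\tau$, $SQS_{\tau'}$ is not affine, then for a permutation $\pi$ of the point set we have $SQS_\tau\sim_\pi SQS_{\tau'}$ if and only if one of the following holds: (a) $\pi=(\sigma_{a,A}|\sigma_{b,B})$ for some $(a,A),(b,B)\in\mathrm{GA}(r,2)$ with $\tau'=B\tau A^{-1}$; (b) $\pi=(\sigma_{a,A}|\sigma_{b,B})\,\xi$ for some $(a,A),(b,B)\in\mathrm{GA}(r,2)$ with $\tau'=B\tau^{-1}A^{-1}$. Moreover, for any $(a,A),(b,B)\in\mathrm{GA}(r,2)$ and any $\tau$, the permutation in (a) (resp. (b)) maps $SQS_\tau$ onto $SQS_{B\tau A^{-1}}$ (resp. $SQS_{B\tau^{-1}A^{-1}}$).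
   Context: $F=\mathrm{GF}(2)$, $\mathbf 0$ is the all-zero vector. The point set consists of the $2^{r+1}$ symbols $(\{a\},\emptyset)$ and $(\emptyset,\{a\})$, $a\in F^r$; a pair $(X,Y)$ with $X,Y\subseteq F^r$ denotes the set of points $\{(\{x\},\emptyset):x\in X\}\cup\{(\emptyset,\{y\}):y\in Y\}$. $SQS_\tau=Q_0\cup Q_1\cup Q_\tau$ where $Q_0=\{(\{a,b,c,d\},\emptyset): a,b,c,d\in F^r \text{ pairwise distinct}, a+b+c+d=\mathbf 0\}$, $Q_1=\{(\emptyset,\{a,b,c,d\}): a,b,c,d\in F^r \text{ pairwise distinct}, a+b+c+d=\mathbf 0\}$, $Q_\tau=\{(\{a,c\},\{b,d\}): a,b,c,d\in F^r, \tau(a+c)=b+d\neq\mathbf 0\}$. $SQS_\tau\sim_\pi SQS_{\tau'}$ means that $\pi$ maps the set of quadruples of $SQS_\tau$ onto that of $SQS_{\tau'}$. A Steiner quadruple system is affine if it is (isomorphic to) the system of supports of the weight-4 codewords of an extended Hamming code of the same length. $\mathrm{GA}(r,2)$ is the group of affine maps $(a,M):b\mapsto a+Mb$ of $F^r$, $a\in F^r$, $M\in\mathrm{GL}(r,2)$. For $(a,A),(b,B)\in\mathrm{GA}(r,2)$, $(\sigma_{a,A}|\sigma_{b,B})$ is the permutation of points $(\{c\},\emptyset)\mapsto(\{a+Ac\},\emptyset)$, $(\emptyset,\{c\})\mapsto(\emptyset,\{b+Bc\})$. $\xi$ is the permutation swapping $(\{c\},\emptyset)$ and $(\emptyset,\{c\})$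 for every $c\in F^r$. For a permutation $\rho$ of $F^r$ and $A,B\in\mathrm{GL}(r,2)$, $B\rho A^{-1}$ denotes the permutation $x\mapsto B\rho(A^{-1}x)$ of $F^r$. *)

theory Defs
  imports "HOL-Analysis.Analysis" "HOL-Library.Z2"
begin

text \<open>F = GF(2) is the type bit; F^r is bit ^ 'n with r = CARD('n).
  Points: Inl c is the symbol ({c},{}), Inr c is the symbol ({},{c}).\<close>

instance bit :: finite
  by standard (rule finite_subset[of _ "{0, 1}"], use bit_not_zero_iff in auto)

type_synonym 'n point = "(bit ^ 'n) + (bit ^ 'n)"

definition Q0 :: "'n::finite point set set" where
  "Q0 = {Inl ` {a, b, c, d} | a b c d. distinct [a, b, c, d] \<and> a + b + c + d = 0}"

definition Q1 :: "'n::finite point set set" where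
  "Q1 = {Inr ` {a, b, c, d} | a b c d. distinct [a, b, c, d] \<and> a + b + c + d = 0}"

definition Qtau :: "(bit ^ 'n \<Rightarrow> bit ^ 'n) \<Rightarrow> 'n::finite point set set" where
  "Qtau \<tau> = {Inl ` {a, c} \<union> Inr ` {b, d} | a b c d. \<tau> (a + c) = b + d \<and> b + d \<noteq> 0}"

definition SQS :: "(bit ^ 'n \<Rightarrow> bit ^ 'n) \<Rightarrow> 'n::finite point set set" where
  "SQS \<tau> = Q0 \<union> Q1 \<union> Qtau \<tau>"

definition sqs_sim :: "('n::finite point \<Rightarrow> 'n point) \<Rightarrow> (bit ^ 'n \<Rightarrow> bit ^ 'n) \<Rightarrow> (bit ^ 'n \<Rightarrow> bit ^ 'n) \<Rightarrow> bool" where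
  "sqs_sim \<pi> \<tau> \<tau>' \<longleftrightarrow> (\<lambda>q. \<pi> ` q) ` SQS \<tau> = SQS \<tau>'"

text \<open>Extended Hamming code of length 2^m, coordinates indexed by F^m
  (parity-check matrix with columns (1, x), x in F^m).\<close>
definition ext_hamming_code :: "(bit ^ 'm \<Rightarrow> bit) set" where
  "ext_hamming_code = {c. (\<Sum>x\<in>UNIV. c x) = 0 \<and> (\<Sum>x\<in>UNIV. c x *s x) = 0}"

definition hamming_sqs :: "(bit ^ 'm::finite) set set" where
  "hamming_sqs = {{x. c x \<noteq> 0} | c. c \<in> ext_hamming_code \<and> card {x. c x \<noteq> 0} = 4}"

definition affine_SQS :: "(bit ^ 'n \<Rightarrow> bit ^ 'n) \<Rightarrow> bool" where
  "affine_SQS \<tau> \<longleftrightarrow> (\<exists>\<phi> :: 'n::finite point \<Rightarrow> bit ^ ('n option).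
      bij \<phi> \<and> (\<lambda>q. \<phi> ` q) ` SQS \<tau> = hamming_sqs)"

definition sigma2 :: "bit ^ 'n \<Rightarrow> bit ^ 'n ^ 'n \<Rightarrow> bit ^ 'n \<Rightarrow> bit ^ 'n ^ 'n \<Rightarrow> 'n::finite point \<Rightarrow> 'n point" where
  "sigma2 a A b B p = (case p of Inl c \<Rightarrow> Inl (a + A *v c) | Inr c \<Rightarrow> Inr (b + B *v c))"

definition xi :: "'n::finite point \<Rightarrow> 'n point" where
  "xi p = (case p of Inl c \<Rightarrow> Inr c | Inr c \<Rightarrow> Inl c)"

definition conj_perm :: "bit ^ 'n ^ 'n \<Rightarrow> (bit ^ 'n \<Rightarrow> bit ^ 'n) \<Rightarrow> bit ^ 'n ^ 'n \<Rightarrow> bit ^ 'n::finite \<Rightarrow> bit ^ 'n" where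
  "conj_perm B \<rho> A x = B *v \<rho> (matrix_inv A *v x)"

end

theory Submission
  imports Defs
begin

(* The two sides Inl and Inr of the point set can be told apart combinatorially. Call a pair
   of points closed if, for any two blocks through it, the remaining four points form a block.
   In SQS tau every pair on one side is closed, whereas a mixed pair is closed only when tau is
   additive, i.e. linear. So an isomorphism between non-affine systems preserves or swaps the
   sides. A side-preserving one maps zero-sum quadruples of each side to zero-sum quadruples,
   hence is affine on each side ({0, x, y, x + y} makes x |-> f x + f 0 additive), and the
   mixed blocks with left part {0, x} and right part {0, tau x} then force tau' = B tau A^-1;
   composing with xi, which turns SQS (inv tau) into SQS tau, reduces a side swap to this case. Linear tau give affine systems, since
   Inl x |-> (tau x, 0), Inr y |-> (y, 1) maps the blocks onto the zero-sum 4-sets of F^(r+1),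
   and two affine systems are isomorphic through the Hamming system. *)

section \<open>Vectors and matrices over GF(2)\<close>

lemma bit_add_self [simp]: "x + x = (0::bit)"
  by (cases x) simp_all

lemma vec_bit_add_self [simp]: "x + x = (0::bit ^ 'n)"
  by (simp add: vec_eq_iff)

lemma vec_bit_add_self_left [simp]: "x + (x + y) = (y::bit ^ 'n)"
  by (simp flip: add.assoc)

lemma vec_bit_add_add_cancel_left: "(x + y) + (x + z) = y + (z::bit ^ 'n)"
  by (simp add: vec_eq_iff)

lemma vec_bit_add_eq_0_iff: "x + y = 0 \<longleftrightarrow> x = (y::bit ^ 'n)"
  by (metis add_right_imp_eq vec_bit_add_self)

lemma of_nat_bit: "(of_nat n :: bit) = (if even n then 0 else 1)"
  by (induction n) auto

lemma of_nat_vec_bit_even: "even n \<Longrightarrow> (of_nat n :: bit ^ 'n) = 0"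
  by (simp add: vec_eq_iff of_nat_bit of_nat_index)

lemma sum_distinct4: "distinct [a, b, c, d] \<Longrightarrow> \<Sum>{a, b, c, d} = a + b + c + (d::'a::comm_monoid_add)"
  by (simp add: ac_simps)

lemma card_eq_4_iff: "card X = 4 \<longleftrightarrow> (\<exists>a b c d. X = {a, b, c, d} \<and> distinct [a, b, c, d])"
proof
  assume X: "card X = 4"
  then obtain a where a: "a \<in> X" by fastforce
  with X have "card (X - {a}) = 3" by (simp add: card.infinite)
  then obtain b c d where "X - {a} = {b, c, d}" "b \<noteq> c" "c \<noteq> d" "b \<noteq> d"
    by (auto simp: card_3_iff)
  with a have "X = {a, b, c, d} \<and> distinct [a, b, c, d]" by auto
  then show "\<exists>a b c d. X = {a, b, c, d} \<and> distinct [a, b, c, d]" by blast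
qed auto

lemma card_2_eq_insert_sum:
  fixes X :: "(bit ^ 'n) set"
  assumes "card X = 2" and "z \<in> X"
  shows "X = {z, z + \<Sum>X}"
proof -
  obtain s t where "X = {s, t}" "s \<noteq> t"
    using assms(1) by (auto simp: card_2_iff)
  with assms(2) show ?thesis
    by (auto simp: add.left_commute insert_commute)
qed

lemma card_2_same_sum_disjoint:
  fixes X X' :: "(bit ^ 'n) set"
  assumes "card X = 2" "card X' = 2" "\<Sum>X = \<Sum>X'" "X \<noteq> X'"
  shows "X \<inter> X' = {}"
  using assms card_2_eq_insert_sum by (metis disjoint_iff)

lemma zero_sum_quadruple_image:
  fixes h :: "'a \<Rightarrow> 'b::comm_monoid_add"
  assumes "inj h" "distinct [a, b, c, d]" "\<Sum>(h ` {a, b, c, d}) = 0"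
  shows "h a + h b + h c + h d = 0"
proof -
  have "distinct [h a, h b, h c, h d]"
    using assms(1,2) by (simp add: inj_eq)
  then have "\<Sum>(h ` {a, b, c, d}) = h a + h b + h c + h d"
    unfolding image_insert image_empty by (rule sum_distinct4)
  with assms(3) show ?thesis
    by simp
qed

lemma inv_zero: "bij \<rho> \<Longrightarrow> \<rho> 0 = 0 \<Longrightarrow> inv \<rho> 0 = 0"
  by (simp add: bij_is_inj inv_f_eq)

lemma matrix_inv_mult:
  assumes "invertible A"
  shows "A ** matrix_inv A = mat 1" and "matrix_inv A ** A = mat 1"
  using someI_ex[OF assms[unfolded invertible_def]] by (simp_all add: matrix_inv_def)

lemma matrix_inv_vector_mult_cancel [simp]:
  fixes A :: "'a::field ^ 'n ^ 'n"
  assumes "invertible A"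
  shows "matrix_inv A *v (A *v x) = x" and "A *v (matrix_inv A *v x) = x"
  by (simp_all add: matrix_vector_mul_assoc matrix_inv_mult[OF assms])

lemma invertible_vector_mult_eq_iff [simp]:
  fixes A :: "'a::field ^ 'n ^ 'n"
  shows "invertible A \<Longrightarrow> A *v x = A *v y \<longleftrightarrow> x = y"
  by (simp add: inj_matrix_vector_mult inj_eq)

lemma invertible_vector_mult_eq_0_iff [simp]:
  fixes A :: "'a::field ^ 'n ^ 'n"
  shows "invertible A \<Longrightarrow> A *v x = 0 \<longleftrightarrow> x = 0"
  by (metis invertible_vector_mult_eq_iff matrix_vector_mult_0_right)

lemma inj_affine_map:
  fixes A :: "'a::field ^ 'n ^ 'n"
  shows "invertible A \<Longrightarrow> inj (\<lambda>x. a + A *v x)"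
  by (simp add: inj_def invertible_vector_mult_eq_iff)

lemma additive_matrix_vector_mult: "Modules.additive ((*v) A)"
  by unfold_locales (rule matrix_vector_right_distrib)

lemma sum_affine_image:
  fixes A :: "bit ^ 'n ^ 'n"
  assumes "invertible A" and "even (card X)"
  shows "\<Sum>((\<lambda>x. a + A *v x) ` X) = A *v \<Sum>X"
proof -
  have "\<Sum>((\<lambda>x. a + A *v x) ` X) = (\<Sum>x\<in>X. a) + (\<Sum>x\<in>X. A *v x)"
    by (simp add: sum.reindex inj_on_subset[OF inj_affine_map[OF assms(1)]] sum.distrib)
  also have "\<dots> = A *v \<Sum>X"
    using assms(2) by (simp add: of_nat_vec_bit_even Modules.additive.sum[OF additive_matrix_vector_mult])
  finally show ?thesis .
qed

lemma additive_imp_linear: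
  fixes h :: "bit ^ 'n \<Rightarrow> bit ^ 'm"
  assumes "Modules.additive h"
  shows "Vector_Spaces.linear (*s) (*s) h"
proof -
  have "h (c *s x) = c *s h x" for c x
    by (cases c) (simp_all add: Modules.additive.zero[OF assms])
  then show ?thesis
    unfolding Vector_Spaces.linear_iff
    by (intro conjI allI vec.vector_space_axioms Modules.additive.add[OF assms])
qed

lemma affine_if_preserves_zero_sum_quadruples:
  fixes f :: "bit ^ 'n \<Rightarrow> bit ^ 'n"
  assumes inj: "inj f"
    and quad: "\<And>a b c d. distinct [a, b, c, d] \<Longrightarrow> a + b + c + d = 0 \<Longrightarrow> f a + f b + f c + f d = 0"
  shows "\<exists>a A. invertible A \<and> (\<forall>x. f x = a + A *v x)"
proof -
  define h where "h x = f x + f 0" for x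
  have "Modules.additive h"
  proof
    fix x y
    show "h (x + y) = h x + h y"
    proof (cases "x = 0 \<or> y = 0 \<or> x = y")
      case True
      then show ?thesis
        unfolding h_def by (auto simp: ac_simps)
    next
      case False
      then have "distinct [0, x, y, x + y]"
        by (auto simp: vec_bit_add_eq_0_iff)
      moreover have "0 + x + y + (x + y) = 0"
        by (simp add: ac_simps)
      ultimately have "f 0 + f x + f y + f (x + y) = 0"
        by (rule quad)
      then have "f (x + y) = f 0 + f x + f y"
        by (simp only: vec_bit_add_eq_0_iff)
      then show ?thesis
        unfolding h_def by (simp add: ac_simps)
    qed
  qed
  then have h: "matrix h *v x = h x" for x
    by (rule matrix_works[OF additive_imp_linear])
  have "inj h"
    using inj unfolding h_def inj_def by simp
  then have "inj ((*v) (matrix h))"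
    using h by (simp add: inj_def)
  then have "invertible (matrix h)"
    using matrix_left_invertible_injective invertible_left_inverse by blast
  moreover have "f x = f 0 + matrix h *v x" for x
    unfolding h h_def by (simp add: ac_simps)
  ultimately show ?thesis
    by blast
qed

lemma conj_perm_apply: "invertible A \<Longrightarrow> conj_perm B \<rho> A (A *v x) = B *v \<rho> x"
  by (simp add: conj_perm_def)

lemma conj_perm_zero: "\<rho> 0 = 0 \<Longrightarrow> conj_perm B \<rho> A 0 = 0"
  by (simp add: conj_perm_def)

lemma image_sets_comp: "(\<lambda>B. (g \<circ> f) ` B) ` S = (\<lambda>B. g ` B) ` (\<lambda>B. f ` B) ` S"
  by (simp add: image_image image_comp)

lemma image_sets_inv:
  assumes "bij f" and "(\<lambda>B. f ` B) ` S = T"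
  shows "(\<lambda>B. inv f ` B) ` T = S"
proof -
  have "(\<lambda>B. inv f ` B) ` T = (\<lambda>B. inv f ` f ` B) ` S"
    by (simp add: image_image flip: assms(2))
  also have "\<dots> = S"
    using assms(1) by (simp add: bij_is_inj image_inv_f_f)
  finally show ?thesis .
qed

lemma image_sets_eq_iff:
  assumes "bij f"
  shows "(\<lambda>B. f ` B) ` S = T \<longleftrightarrow> (\<forall>B. f ` B \<in> T \<longleftrightarrow> B \<in> S)"
proof -
  have mem: "f ` B \<in> (\<lambda>B. f ` B) ` S \<longleftrightarrow> B \<in> S" for B
    using assms by (auto simp: bij_is_inj inj_image_eq_iff)
  show ?thesis
  proof
    assume "(\<lambda>B. f ` B) ` S = T"
    with mem show "\<forall>B. f ` B \<in> T \<longleftrightarrow> B \<in> S" by blast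
  next
    assume T: "\<forall>B. f ` B \<in> T \<longleftrightarrow> B \<in> S"
    show "(\<lambda>B. f ` B) ` S = T"
    proof (rule set_eqI)
      fix Q
      have "Q = f ` (inv f ` Q)"
        using assms by (simp add: bij_is_surj image_f_inv_f)
      then show "Q \<in> (\<lambda>B. f ` B) ` S \<longleftrightarrow> Q \<in> T"
        using mem T by metis
    qed
  qed
qed

definition pair_closed :: "'a set set \<Rightarrow> 'a \<Rightarrow> 'a \<Rightarrow> bool" where
  "pair_closed S p q \<longleftrightarrow>
     (\<forall>B\<^sub>1\<in>S. \<forall>B\<^sub>2\<in>S. {p, q} \<subseteq> B\<^sub>1 \<longrightarrow> {p, q} \<subseteq> B\<^sub>2 \<longrightarrow> B\<^sub>1 \<noteq> B\<^sub>2 \<longrightarrow> B\<^sub>1 \<union> B\<^sub>2 - {p, q} \<in> S)"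

lemma pair_closed_commute: "pair_closed S p q \<longleftrightarrow> pair_closed S q p"
  unfolding pair_closed_def by (simp add: insert_commute)

lemma pair_closed_image_iff:
  assumes "inj f"
  shows "pair_closed ((\<lambda>B. f ` B) ` S) (f p) (f q) \<longleftrightarrow> pair_closed S p q"
proof -
  have "f ` B\<^sub>1 \<union> f ` B\<^sub>2 - {f p, f q} = f ` (B\<^sub>1 \<union> B\<^sub>2 - {p, q})" for B\<^sub>1 B\<^sub>2
    using assms by (auto simp: inj_eq)
  moreover have "{f p, f q} \<subseteq> f ` B \<longleftrightarrow> {p, q} \<subseteq> B" for B
    using assms by (simp add: inj_image_mem_iff)
  moreover have "f ` B \<in> (\<lambda>B. f ` B) ` S \<longleftrightarrow> B \<in> S" for B
    using assms by (auto simp: inj_image_eq_iff)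
  ultimately show ?thesis
    using assms by (simp add: pair_closed_def inj_image_eq_iff)
qed

section \<open>Blocks of \<open>SQS \<tau>\<close>\<close>

definition sqs_block :: "(bit ^ 'n \<Rightarrow> bit ^ 'n) \<Rightarrow> (bit ^ 'n::finite) set \<Rightarrow> (bit ^ 'n) set \<Rightarrow> bool" where
  "sqs_block \<tau> X Y \<longleftrightarrow> (card X = 4 \<and> Y = {} \<and> \<Sum>X = 0) \<or> (X = {} \<and> card Y = 4 \<and> \<Sum>Y = 0)
     \<or> (card X = 2 \<and> card Y = 2 \<and> \<tau> (\<Sum>X) = \<Sum>Y)"

lemma sqs_block_empty_right [simp]: "sqs_block \<tau> X {} \<longleftrightarrow> card X = 4 \<and> \<Sum>X = 0"
  and sqs_block_empty_left [simp]: "sqs_block \<tau> {} Y \<longleftrightarrow> card Y = 4 \<and> \<Sum>Y = 0"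
  by (auto simp: sqs_block_def)

lemma sqs_block_inv_iff: "bij \<rho> \<Longrightarrow> sqs_block (inv \<rho>) Y X \<longleftrightarrow> sqs_block \<rho> X Y"
proof -
  assume "bij \<rho>"
  then have "inv \<rho> u = v \<longleftrightarrow> \<rho> v = u" for u v
    by (metis bij_inv_eq_iff)
  then show ?thesis unfolding sqs_block_def by auto
qed

lemma Inl_Inr_vimage_decomp: "P = Inl ` (Inl -` P) \<union> Inr ` (Inr -` P)"
proof (rule set_eqI)
  show "p \<in> P \<longleftrightarrow> p \<in> Inl ` (Inl -` P) \<union> Inr ` (Inr -` P)" for p
    by (cases p) auto
qed

lemma sqs_block_vimage_if_mem_SQS:
  assumes "\<tau> 0 = 0" and "P \<in> SQS \<tau>"
  shows "sqs_block \<tau> (Inl -` P) (Inr -` P)"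
proof -
  consider a b c d where "distinct [a, b, c, d]" "a + b + c + d = 0" "P = Inl ` {a, b, c, d}"
    | a b c d where "distinct [a, b, c, d]" "a + b + c + d = 0" "P = Inr ` {a, b, c, d}"
    | a b c d where "\<tau> (a + c) = b + d" "b + d \<noteq> 0" "P = Inl ` {a, c} \<union> Inr ` {b, d}"
    using assms(2) unfolding SQS_def Q0_def Q1_def Qtau_def by blast
  then show ?thesis
  proof cases
    case 1
    then have "Inl -` P = {a, b, c, d}" "Inr -` P = {}" by auto
    with 1 show ?thesis by (simp add: sqs_block_def add.assoc)
  next
    case 2
    then have "Inl -` P = {}" "Inr -` P = {a, b, c, d}" by auto
    with 2 show ?thesis by (simp add: sqs_block_def add.assoc)
  next
    case 3
    then have "Inl -` P = {a, c}" "Inr -` P = {b, d}" by auto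
    moreover have "a \<noteq> c" "b \<noteq> d" using 3 assms(1) by auto
    ultimately show ?thesis using 3 by (simp add: sqs_block_def)
  qed
qed

lemma Inl_Inr_mem_SQS_if_sqs_block:
  assumes "sqs_block \<tau> X Y"
  shows "Inl ` X \<union> Inr ` Y \<in> SQS \<tau>"
proof -
  consider "card X = 4" "Y = {}" "\<Sum>X = 0" | "X = {}" "card Y = 4" "\<Sum>Y = 0"
    | "card X = 2" "card Y = 2" "\<tau> (\<Sum>X) = \<Sum>Y"
    using assms unfolding sqs_block_def by blast
  then show ?thesis
  proof cases
    case 1
    then obtain a b c d where X: "X = {a, b, c, d}" and abcd: "distinct [a, b, c, d]"
      by (auto simp: card_eq_4_iff)
    have "Inl ` X \<union> Inr ` Y = Inl ` {a, b, c, d}" "a + b + c + d = 0"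
      using 1 X sum_distinct4[OF abcd] by simp_all
    with abcd have "Inl ` X \<union> Inr ` Y \<in> Q0"
      unfolding Q0_def by blast
    then show ?thesis unfolding SQS_def by blast
  next
    case 2
    then obtain a b c d where Y: "Y = {a, b, c, d}" and abcd: "distinct [a, b, c, d]"
      by (auto simp: card_eq_4_iff)
    have "Inl ` X \<union> Inr ` Y = Inr ` {a, b, c, d}" "a + b + c + d = 0"
      using 2 Y sum_distinct4[OF abcd] by simp_all
    with abcd have "Inl ` X \<union> Inr ` Y \<in> Q1"
      unfolding Q1_def by blast
    then show ?thesis unfolding SQS_def by blast
  next
    case 3
    then obtain a c b d where X: "X = {a, c}" "a \<noteq> c" and Y: "Y = {b, d}" "b \<noteq> d"
      by (auto simp: card_2_iff)
    have "\<tau> (a + c) = b + d" "b + d \<noteq> 0"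
      using 3 X Y by (simp_all add: vec_bit_add_eq_0_iff)
    with X Y have "Inl ` X \<union> Inr ` Y \<in> Qtau \<tau>"
      unfolding Qtau_def by blast
    then show ?thesis unfolding SQS_def by blast
  qed
qed

lemma mem_SQS_iff:
  assumes "\<tau> 0 = 0"
  shows "P \<in> SQS \<tau> \<longleftrightarrow> sqs_block \<tau> (Inl -` P) (Inr -` P)"
proof
  assume "P \<in> SQS \<tau>"
  then show "sqs_block \<tau> (Inl -` P) (Inr -` P)"
    by (rule sqs_block_vimage_if_mem_SQS[where \<tau> = \<tau>, OF assms])
next
  assume "sqs_block \<tau> (Inl -` P) (Inr -` P)"
  then have "Inl ` (Inl -` P) \<union> Inr ` (Inr -` P) \<in> SQS \<tau>"
    by (rule Inl_Inr_mem_SQS_if_sqs_block)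
  then show "P \<in> SQS \<tau>"
    by (simp only: Inl_Inr_vimage_decomp[symmetric])
qed

lemma vimage_Inl_image_Inr [simp]: "Inl -` Inr ` Y = {}"
  and vimage_Inr_image_Inl [simp]: "Inr -` Inl ` X = {}"
  by auto

lemma Inl_Inr_mem_SQS_iff:
  "\<tau> 0 = 0 \<Longrightarrow> Inl ` X \<union> Inr ` Y \<in> SQS \<tau> \<longleftrightarrow> sqs_block \<tau> X Y"
  by (simp add: mem_SQS_iff inj_vimage_image_eq)

lemma sqs_sim_iff_mem: "bij \<pi> \<Longrightarrow> sqs_sim \<pi> \<tau> \<tau>' \<longleftrightarrow> (\<forall>P. \<pi> ` P \<in> SQS \<tau>' \<longleftrightarrow> P \<in> SQS \<tau>)"
  unfolding sqs_sim_def by (rule image_sets_eq_iff)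

lemma sqs_sim_comp: "sqs_sim f \<tau>\<^sub>1 \<tau>\<^sub>2 \<Longrightarrow> sqs_sim g \<tau>\<^sub>2 \<tau>\<^sub>3 \<Longrightarrow> sqs_sim (g \<circ> f) \<tau>\<^sub>1 \<tau>\<^sub>3"
  unfolding sqs_sim_def by (simp only: image_sets_comp)

lemma sqs_sim_inv: "bij \<pi> \<Longrightarrow> sqs_sim \<pi> \<tau> \<tau>' \<Longrightarrow> sqs_sim (inv \<pi>) \<tau>' \<tau>"
  unfolding sqs_sim_def by (rule image_sets_inv)

lemma sigma2_Inl [simp]: "sigma2 a A b B (Inl x) = Inl (a + A *v x)"
  and sigma2_Inr [simp]: "sigma2 a A b B (Inr y) = Inr (b + B *v y)"
  by (simp_all add: sigma2_def)

lemma sigma2_image: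
  "sigma2 a A b B ` (Inl ` X \<union> Inr ` Y) = Inl ` ((\<lambda>x. a + A *v x) ` X) \<union> Inr ` ((\<lambda>y. b + B *v y) ` Y)"
  by (simp add: image_Un image_image)

lemma bij_sigma2:
  assumes "invertible A" "invertible B"
  shows "bij (sigma2 a A b B)"
proof -
  have "inj (sigma2 a A b B)"
  proof (rule injI)
    fix p q assume "sigma2 a A b B p = sigma2 a A b B q"
    then show "p = q"
      using assms by (cases p; cases q) simp_all
  qed
  then show ?thesis by (simp add: bij_def finite_UNIV_inj_surj)
qed

lemma sqs_block_affine_image_iff:
  fixes A B :: "bit ^ 'n::finite ^ 'n"
  assumes A: "invertible A" and B: "invertible B"
  shows "sqs_block (conj_perm B \<tau> A) ((\<lambda>x. a + A *v x) ` X) ((\<lambda>y. b + B *v y) ` Y)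
    \<longleftrightarrow> sqs_block \<tau> X Y"
proof -
  have card: "card ((\<lambda>x. a + A *v x) ` X) = card X" "card ((\<lambda>y. b + B *v y) ` Y) = card Y"
    by (simp_all add: card_image inj_on_subset[OF inj_affine_map] A B)
  have sum_X: "\<Sum>((\<lambda>x. a + A *v x) ` X) = A *v \<Sum>X" if "even (card X)"
    using sum_affine_image A that by blast
  have sum_Y: "\<Sum>((\<lambda>y. b + B *v y) ` Y) = B *v \<Sum>Y" if "even (card Y)"
    using sum_affine_image B that by blast
  have "conj_perm B \<tau> A (A *v u) = B *v v \<longleftrightarrow> \<tau> u = v" for u v
    using A B by (simp add: conj_perm_apply)
  then have "card X = 2 \<and> card Y = 2 \<and> conj_perm B \<tau> A (\<Sum>((\<lambda>x. a + A *v x) ` X)) = \<Sum>((\<lambda>y. b + B *v y) ` Y)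
      \<longleftrightarrow> card X = 2 \<and> card Y = 2 \<and> \<tau> (\<Sum>X) = \<Sum>Y"
    using sum_X sum_Y by auto
  moreover have "card X = 4 \<and> Y = {} \<and> \<Sum>((\<lambda>x. a + A *v x) ` X) = 0 \<longleftrightarrow> card X = 4 \<and> Y = {} \<and> \<Sum>X = 0"
    using sum_X A by auto
  moreover have "X = {} \<and> card Y = 4 \<and> \<Sum>((\<lambda>y. b + B *v y) ` Y) = 0 \<longleftrightarrow> X = {} \<and> card Y = 4 \<and> \<Sum>Y = 0"
    using sum_Y B by auto
  ultimately show ?thesis
    unfolding sqs_block_def card image_is_empty by argo
qed

lemma sqs_sim_sigma2:
  assumes "invertible A" "invertible B" "\<tau> 0 = 0"
  shows "sqs_sim (sigma2 a A b B) \<tau> (conj_perm B \<tau> A)"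
  unfolding sqs_sim_iff_mem[OF bij_sigma2[OF assms(1,2)]]
proof
  fix P
  have "sigma2 a A b B ` P = Inl ` ((\<lambda>x. a + A *v x) ` (Inl -` P)) \<union> Inr ` ((\<lambda>y. b + B *v y) ` (Inr -` P))"
    by (subst Inl_Inr_vimage_decomp) (rule sigma2_image)
  then show "sigma2 a A b B ` P \<in> SQS (conj_perm B \<tau> A) \<longleftrightarrow> P \<in> SQS \<tau>"
    using assms by (simp add: mem_SQS_iff conj_perm_zero inj_vimage_image_eq sqs_block_affine_image_iff)
qed

lemma xi_Inl [simp]: "xi (Inl x) = Inr x"
  and xi_Inr [simp]: "xi (Inr x) = Inl x"
  by (simp_all add: xi_def)

lemma xi_xi [simp]: "xi (xi p) = p"
  by (cases p) simp_all

lemma bij_xi: "bij xi"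
  by (rule o_bij[of xi]) (simp_all add: fun_eq_iff)

lemma sqs_sim_xi:
  fixes \<rho> :: "bit ^ 'n::finite \<Rightarrow> bit ^ 'n"
  assumes "bij \<rho>" "\<rho> 0 = 0"
  shows "sqs_sim xi \<rho> (inv \<rho>)"
  unfolding sqs_sim_iff_mem[OF bij_xi]
proof
  fix P :: "'n point set"
  have "xi ` P = Inl ` (Inr -` P) \<union> Inr ` (Inl -` P)"
  proof (rule set_eqI)
    fix p
    have "p \<in> xi ` P \<longleftrightarrow> xi p \<in> P"
      by (metis image_iff xi_xi)
    then show "p \<in> xi ` P \<longleftrightarrow> p \<in> Inl ` (Inr -` P) \<union> Inr ` (Inl -` P)"
      by (cases p) auto
  qed
  then show "xi ` P \<in> SQS (inv \<rho>) \<longleftrightarrow> P \<in> SQS \<rho>"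
    using assms by (simp add: mem_SQS_iff inv_zero inj_vimage_image_eq sqs_block_inv_iff)
qed

lemma sqs_sim_sigma2_xi:
  assumes "invertible A" "invertible B" "bij \<rho>" "\<rho> 0 = 0"
  shows "sqs_sim (sigma2 a A b B \<circ> xi) \<rho> (conj_perm B (inv \<rho>) A)"
  using sqs_sim_comp[OF sqs_sim_xi sqs_sim_sigma2] assms inv_zero by blast

section \<open>Closed pairs and the two sides\<close>

(* What a block through Inl x and Inl y leaves after removing these two points: a left pair
   with sum d = x + y or a right pair with sum w = tau (x + y). *)
definition sqs_residue :: "bit ^ 'n \<Rightarrow> bit ^ 'n \<Rightarrow> (bit ^ 'n) set \<Rightarrow> (bit ^ 'n) set \<Rightarrow> bool" where
  "sqs_residue d w X Y \<longleftrightarrow> (card X = 2 \<and> Y = {} \<and> \<Sum>X = d) \<or> (X = {} \<and> card Y = 2 \<and> \<Sum>Y = w)"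

lemma sqs_residue_Inl_pair:
  fixes \<tau> :: "bit ^ 'n::finite \<Rightarrow> bit ^ 'n"
  assumes "\<tau> 0 = 0" "x \<noteq> y" "P \<in> SQS \<tau>" "{Inl x, Inl y} \<subseteq> P"
  shows "sqs_residue (x + y) (\<tau> (x + y)) (Inl -` P - {x, y}) (Inr -` P)"
proof -
  have xy: "{x, y} \<subseteq> Inl -` P"
    using assms(4) by auto
  have "sqs_block \<tau> (Inl -` P) (Inr -` P)"
    using assms(1,3) mem_SQS_iff by blast
  then consider "card (Inl -` P) = 4" "Inr -` P = {}" "\<Sum>(Inl -` P) = 0"
    | "card (Inl -` P) = 2" "card (Inr -` P) = 2" "\<tau> (\<Sum>(Inl -` P)) = \<Sum>(Inr -` P)"
    unfolding sqs_block_def using xy by auto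
  then show ?thesis
  proof cases
    case 1
    have "card (Inl -` P - {x, y}) = 2"
      using 1 xy assms(2) by (simp add: card_Diff_subset)
    moreover have "\<Sum>(Inl -` P) = \<Sum>(Inl -` P - {x, y}) + (x + y)"
      using xy assms(2) by (simp add: sum.subset_diff[OF xy])
    ultimately show ?thesis
      using 1 by (simp add: sqs_residue_def vec_bit_add_eq_0_iff)
  next
    case 2
    then have "Inl -` P = {x, y}"
      using xy assms(2) by (metis card_2_iff card_subset_eq finite.emptyI finite.insertI)
    with 2 assms(2) show ?thesis
      by (simp add: sqs_residue_def)
  qed
qed

lemma sqs_block_Un_residues:
  fixes \<tau> :: "bit ^ 'n::finite \<Rightarrow> bit ^ 'n"
  assumes "\<tau> d = w" and "sqs_residue d w X\<^sub>1 Y\<^sub>1" "sqs_residue d w X\<^sub>2 Y\<^sub>2" and "(X\<^sub>1, Y\<^sub>1) \<noteq> (X\<^sub>2, Y\<^sub>2)"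
  shows "sqs_block \<tau> (X\<^sub>1 \<union> X\<^sub>2) (Y\<^sub>1 \<union> Y\<^sub>2)"
proof -
  have union: "card (Z\<^sub>1 \<union> Z\<^sub>2) = 4 \<and> \<Sum>(Z\<^sub>1 \<union> Z\<^sub>2) = 0"
    if "card Z\<^sub>1 = 2" "card Z\<^sub>2 = 2" "\<Sum>Z\<^sub>1 = \<Sum>Z\<^sub>2" "Z\<^sub>1 \<noteq> Z\<^sub>2" for Z\<^sub>1 Z\<^sub>2 :: "(bit ^ 'n) set"
    using card_2_same_sum_disjoint[OF that] that by (simp add: card_Un_disjoint sum.union_disjoint)
  from assms(2,3) show ?thesis
    unfolding sqs_residue_def
  proof (elim disjE conjE)
    assume "card X\<^sub>1 = 2" "Y\<^sub>1 = {}" "\<Sum>X\<^sub>1 = d" "card X\<^sub>2 = 2" "Y\<^sub>2 = {}" "\<Sum>X\<^sub>2 = d"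
    with assms(4) union[of X\<^sub>1 X\<^sub>2] show ?thesis by (simp add: sqs_block_def)
  next
    assume "X\<^sub>1 = {}" "card Y\<^sub>1 = 2" "\<Sum>Y\<^sub>1 = w" "X\<^sub>2 = {}" "card Y\<^sub>2 = 2" "\<Sum>Y\<^sub>2 = w"
    with assms(4) union[of Y\<^sub>1 Y\<^sub>2] show ?thesis by (simp add: sqs_block_def)
  next
    assume "card X\<^sub>1 = 2" "Y\<^sub>1 = {}" "\<Sum>X\<^sub>1 = d" "X\<^sub>2 = {}" "card Y\<^sub>2 = 2" "\<Sum>Y\<^sub>2 = w"
    with assms(1) show ?thesis by (simp add: sqs_block_def)
  next
    assume "X\<^sub>1 = {}" "card Y\<^sub>1 = 2" "\<Sum>Y\<^sub>1 = w" "card X\<^sub>2 = 2" "Y\<^sub>2 = {}" "\<Sum>X\<^sub>2 = d"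
    with assms(1) show ?thesis by (simp add: sqs_block_def)
  qed
qed

lemma pair_closed_Inl_Inl:
  fixes \<tau> :: "bit ^ 'n::finite \<Rightarrow> bit ^ 'n"
  assumes "\<tau> 0 = 0" "x \<noteq> y"
  shows "pair_closed (SQS \<tau>) (Inl x) (Inl y)"
  unfolding pair_closed_def
proof (intro ballI impI)
  fix P\<^sub>1 P\<^sub>2 :: "'n point set"
  assume P: "P\<^sub>1 \<in> SQS \<tau>" "P\<^sub>2 \<in> SQS \<tau>" "{Inl x, Inl y} \<subseteq> P\<^sub>1" "{Inl x, Inl y} \<subseteq> P\<^sub>2"
    and "P\<^sub>1 \<noteq> P\<^sub>2"
  have "(Inl -` P\<^sub>1 - {x, y}, Inr -` P\<^sub>1) \<noteq> (Inl -` P\<^sub>2 - {x, y}, Inr -` P\<^sub>2)"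
  proof
    assume "(Inl -` P\<^sub>1 - {x, y}, Inr -` P\<^sub>1) = (Inl -` P\<^sub>2 - {x, y}, Inr -` P\<^sub>2)"
    then have "Inl -` P\<^sub>1 = Inl -` P\<^sub>2" "Inr -` P\<^sub>1 = Inr -` P\<^sub>2"
      using P(3,4) by auto
    then have "P\<^sub>1 = P\<^sub>2"
      using Inl_Inr_vimage_decomp[of P\<^sub>1] Inl_Inr_vimage_decomp[of P\<^sub>2] by argo
    with \<open>P\<^sub>1 \<noteq> P\<^sub>2\<close> show False ..
  qed
  then have "sqs_block \<tau> ((Inl -` P\<^sub>1 - {x, y}) \<union> (Inl -` P\<^sub>2 - {x, y})) (Inr -` P\<^sub>1 \<union> Inr -` P\<^sub>2)"
    by (rule sqs_block_Un_residues[where \<tau> = \<tau>, OF refl sqs_residue_Inl_pair[OF assms P(1,3)] sqs_residue_Inl_pair[OF assms P(2,4)]])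
  moreover have "Inl -` (P\<^sub>1 \<union> P\<^sub>2 - {Inl x, Inl y}) = (Inl -` P\<^sub>1 - {x, y}) \<union> (Inl -` P\<^sub>2 - {x, y})"
    and "Inr -` (P\<^sub>1 \<union> P\<^sub>2 - {Inl x, Inl y}) = Inr -` P\<^sub>1 \<union> Inr -` P\<^sub>2"
    by auto
  ultimately show "P\<^sub>1 \<union> P\<^sub>2 - {Inl x, Inl y} \<in> SQS \<tau>"
    using assms(1) by (simp add: mem_SQS_iff)
qed

lemma pair_closed_Inr_Inr:
  fixes \<tau> :: "bit ^ 'n::finite \<Rightarrow> bit ^ 'n"
  assumes "bij \<tau>" "\<tau> 0 = 0" "x \<noteq> y"
  shows "pair_closed (SQS \<tau>) (Inr x) (Inr y)"
proof -
  have "pair_closed (SQS (inv \<tau>)) (xi (Inr x)) (xi (Inr y))"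
    using pair_closed_Inl_Inl[where \<tau> = "inv \<tau>", OF inv_zero[OF assms(1,2)] assms(3)] by simp
  moreover have "(\<lambda>B. xi ` B) ` SQS \<tau> = SQS (inv \<tau>)"
    using sqs_sim_xi[OF assms(1,2)] unfolding sqs_sim_def .
  ultimately show ?thesis
    using pair_closed_image_iff[OF bij_is_inj[OF bij_xi]] by metis
qed

lemma not_pair_closed_Inl_Inr:
  fixes \<tau> :: "bit ^ 'n::finite \<Rightarrow> bit ^ 'n"
  assumes "bij \<tau>" "\<tau> 0 = 0" "\<not> Modules.additive \<tau>"
  shows "\<not> pair_closed (SQS \<tau>) (Inl a) (Inr b)"
proof
  assume closed: "pair_closed (SQS \<tau>) (Inl a) (Inr b)"
  obtain u v where uv: "\<tau> (u + v) \<noteq> \<tau> u + \<tau> v"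
    using assms(3) unfolding Modules.additive_def by blast
  then have uv_ne: "u \<noteq> 0" "v \<noteq> 0" "u \<noteq> v"
    using assms(2) by auto
  have \<tau>_eq_iff: "\<tau> c = \<tau> c' \<longleftrightarrow> c = c'" for c c'
    using assms(1) by (simp add: bij_is_inj inj_eq)
  have \<tau>_eq_0_iff: "\<tau> c = 0 \<longleftrightarrow> c = 0" for c
    using \<tau>_eq_iff[of c 0] assms(2) by simp
  (* the residue of two of these blocks through Inl a and Inr b is a block only if
     tau (u + v) = tau u + tau v *)
  define line where "line c = Inl ` {a, a + c} \<union> Inr ` {b, b + \<tau> c}" for c
  have line: "line c \<in> SQS \<tau>" if "c \<noteq> 0" for c
    unfolding line_def Inl_Inr_mem_SQS_iff[where \<tau> = \<tau>, OF assms(2)]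
    using that by (simp add: sqs_block_def \<tau>_eq_0_iff)
  have through: "{Inl a, Inr b} \<subseteq> line c" for c
    by (simp add: line_def)
  have "Inl (a + u) \<in> line u" "Inl (a + u) \<notin> line v"
    using uv_ne by (simp_all add: line_def)
  then have "line u \<noteq> line v"
    by blast
  then have "line u \<union> line v - {Inl a, Inr b} \<in> SQS \<tau>"
    by (rule closed[unfolded pair_closed_def, rule_format, OF line[OF uv_ne(1)] line[OF uv_ne(2)] through through])
  moreover have "Inl -` (line u \<union> line v - {Inl a, Inr b}) = {a + u, a + v}"
    using uv_ne by (auto simp: line_def)
  moreover have "Inr -` (line u \<union> line v - {Inl a, Inr b}) = {b + \<tau> u, b + \<tau> v}"
    using uv_ne \<tau>_eq_0_iff by (auto simp: line_def)
  ultimately have "sqs_block \<tau> {a + u, a + v} {b + \<tau> u, b + \<tau> v}"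
    using mem_SQS_iff[where \<tau> = \<tau>, OF assms(2)] by metis
  moreover have "\<Sum>{a + u, a + v} = u + v" "\<Sum>{b + \<tau> u, b + \<tau> v} = \<tau> u + \<tau> v"
    using uv_ne \<tau>_eq_iff by (simp_all add: vec_bit_add_add_cancel_left)
  ultimately show False
    using uv uv_ne \<tau>_eq_iff by (simp add: sqs_block_def)
qed

lemma pair_closed_SQS_iff:
  fixes \<tau> :: "bit ^ 'n::finite \<Rightarrow> bit ^ 'n"
  assumes "bij \<tau>" "\<tau> 0 = 0" "\<not> Modules.additive \<tau>" "p \<noteq> q"
  shows "pair_closed (SQS \<tau>) p q \<longleftrightarrow> isl p = isl q"
proof (cases p; cases q)
  fix x y
  assume "p = Inl x" "q = Inr y"
  then show ?thesis using not_pair_closed_Inl_Inr assms(1-3) by simp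
next
  fix x y
  assume "p = Inr x" "q = Inl y"
  then show ?thesis
    using not_pair_closed_Inl_Inr[OF assms(1-3), of y x] pair_closed_commute[of "SQS \<tau>" "Inr x" "Inl y"]
    by simp
qed (use assms pair_closed_Inl_Inl pair_closed_Inr_Inr in auto)

lemma sqs_sim_preserves_or_swaps_sides:
  fixes \<tau> \<tau>' :: "bit ^ 'n::finite \<Rightarrow> bit ^ 'n"
  assumes "bij \<pi>" "sqs_sim \<pi> \<tau> \<tau>'"
    and "bij \<tau>" "\<tau> 0 = 0" "\<not> Modules.additive \<tau>"
    and "bij \<tau>'" "\<tau>' 0 = 0" "\<not> Modules.additive \<tau>'"
  shows "(\<forall>p. isl (\<pi> p) = isl p) \<or> (\<forall>p. isl (\<pi> p) \<noteq> isl p)"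
proof -
  have key: "isl (\<pi> p) = isl (\<pi> q) \<longleftrightarrow> isl p = isl q" for p q
  proof (cases "p = q")
    case False
    then have "\<pi> p \<noteq> \<pi> q"
      using assms(1) by (simp add: bij_is_inj inj_eq)
    then have "isl (\<pi> p) = isl (\<pi> q) \<longleftrightarrow> pair_closed (SQS \<tau>') (\<pi> p) (\<pi> q)"
      using pair_closed_SQS_iff assms(6-8) by blast
    also have "\<dots> \<longleftrightarrow> pair_closed (SQS \<tau>) p q"
      using pair_closed_image_iff[OF bij_is_inj[OF assms(1)]] assms(2) unfolding sqs_sim_def by metis
    also have "\<dots> \<longleftrightarrow> isl p = isl q"
      using pair_closed_SQS_iff assms(3-5) False by blast
    finally show ?thesis .
  qed simp
  show ?thesis
    using key[of _ "Inl 0"] by (cases "isl (\<pi> (Inl 0))") auto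
qed

section \<open>Isomorphisms between non-affine systems\<close>

lemma conj_perm_if_affine_preserves_sqs_blocks:
  fixes \<tau> \<tau>' :: "bit ^ 'n::finite \<Rightarrow> bit ^ 'n"
  assumes "invertible A" "invertible B" "\<And>x. f x = a + A *v x" "\<And>y. g y = b + B *v y"
    and "bij \<tau>" "\<tau> 0 = 0" "\<tau>' 0 = 0"
    and block: "\<And>X Y. sqs_block \<tau> X Y \<Longrightarrow> sqs_block \<tau>' (f ` X) (g ` Y)"
  shows "\<tau>' = conj_perm B \<tau> A"
proof -
  have \<tau>'_A: "\<tau>' (A *v x) = B *v \<tau> x" for x
  proof (cases "x = 0")
    case False
    then have "\<tau> x \<noteq> 0"
      using assms(5,6) by (metis bij_pointE)
    with False have "sqs_block \<tau> {0, x} {0, \<tau> x}"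
      by (simp add: sqs_block_def)
    then have "sqs_block \<tau>' (f ` {0, x}) (g ` {0, \<tau> x})"
      by (rule block)
    moreover have "card (f ` {0, x}) = 2" "\<Sum>(f ` {0, x}) = A *v x"
      using False assms(1) by (simp_all add: assms(3))
    moreover have "\<Sum>(g ` {0, \<tau> x}) = B *v \<tau> x"
      using \<open>\<tau> x \<noteq> 0\<close> assms(2) by (simp add: assms(4))
    ultimately show ?thesis
      by (auto simp: sqs_block_def)
  qed (simp add: assms(6,7))
  show ?thesis
  proof
    fix y
    have "\<tau>' y = \<tau>' (A *v (matrix_inv A *v y))"
      using assms(1) by simp
    also have "\<dots> = conj_perm B \<tau> A y"
      unfolding \<tau>'_A conj_perm_def ..
    finally show "\<tau>' y = conj_perm B \<tau> A y" .
  qed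
qed

lemma affine_if_preserves_sqs_blocks:
  fixes \<tau> \<tau>' :: "bit ^ 'n::finite \<Rightarrow> bit ^ 'n"
  assumes "inj f" "inj g" "bij \<tau>" "\<tau> 0 = 0" "\<tau>' 0 = 0"
    and block: "\<And>X Y. sqs_block \<tau> X Y \<Longrightarrow> sqs_block \<tau>' (f ` X) (g ` Y)"
  shows "\<exists>a A b B. invertible A \<and> invertible B \<and> (\<forall>x. f x = a + A *v x) \<and> (\<forall>y. g y = b + B *v y)
    \<and> \<tau>' = conj_perm B \<tau> A"
proof -
  have "f a + f b + f c + f d = 0" if abcd: "distinct [a, b, c, d]" "a + b + c + d = 0" for a b c d
  proof -
    have "sqs_block \<tau> {a, b, c, d} {}"
      using abcd by (simp add: sum_distinct4 add.assoc)
    then have "sqs_block \<tau>' (f ` {a, b, c, d}) (g ` {})"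
      by (rule block)
    then show ?thesis
      using zero_sum_quadruple_image[OF assms(1) abcd(1)] by simp
  qed
  then obtain a A where A: "invertible A" and f: "\<And>x. f x = a + A *v x"
    using affine_if_preserves_zero_sum_quadruples[OF assms(1)] by blast
  have "g a + g b + g c + g d = 0" if abcd: "distinct [a, b, c, d]" "a + b + c + d = 0" for a b c d
  proof -
    have "sqs_block \<tau> {} {a, b, c, d}"
      using abcd by (simp add: sum_distinct4 add.assoc)
    then have "sqs_block \<tau>' (f ` {}) (g ` {a, b, c, d})"
      by (rule block)
    then show ?thesis
      using zero_sum_quadruple_image[OF assms(2) abcd(1)] by simp
  qed
  then obtain b B where B: "invertible B" and g: "\<And>y. g y = b + B *v y"
    using affine_if_preserves_zero_sum_quadruples[OF assms(2)] by blast
  have "\<tau>' = conj_perm B \<tau> A"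
    using conj_perm_if_affine_preserves_sqs_blocks[OF A B f g assms(3-5) block] .
  with A B f g show ?thesis
    by blast
qed

lemma side_preserving_decomp:
  assumes "bij \<pi>" "\<forall>p. isl (\<pi> p) = isl p"
  obtains f g where "inj f" "inj g" "\<And>x. \<pi> (Inl x) = Inl (f x)" "\<And>y. \<pi> (Inr y) = Inr (g y)"
proof
  have "isl (\<pi> (Inl x))" "\<not> isl (\<pi> (Inr y))" for x y
    using assms(2) by simp_all
  then show \<pi>_Inl: "\<pi> (Inl x) = Inl (projl (\<pi> (Inl x)))" and \<pi>_Inr: "\<pi> (Inr y) = Inr (projr (\<pi> (Inr y)))"
    for x y by simp_all
  have \<pi>_eq_iff: "\<pi> p = \<pi> q \<longleftrightarrow> p = q" for p q
    using assms(1) by (simp add: bij_is_inj inj_eq)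
  show "inj (\<lambda>x. projl (\<pi> (Inl x)))"
    by (rule injI) (metis \<pi>_Inl \<pi>_eq_iff sum.inject(1))
  show "inj (\<lambda>y. projr (\<pi> (Inr y)))"
    by (rule injI) (metis \<pi>_Inr \<pi>_eq_iff sum.inject(2))
qed

lemma side_preserving_sqs_sim_eq_sigma2:
  fixes \<tau> \<tau>' :: "bit ^ 'n::finite \<Rightarrow> bit ^ 'n"
  assumes "bij \<pi>" "sqs_sim \<pi> \<tau> \<tau>'" "\<forall>p. isl (\<pi> p) = isl p"
    and "bij \<tau>" "\<tau> 0 = 0" "\<tau>' 0 = 0"
  shows "\<exists>a A b B. invertible A \<and> invertible B \<and> \<pi> = sigma2 a A b B \<and> \<tau>' = conj_perm B \<tau> A"
proof -
  obtain f g where "inj f" "inj g" and \<pi>_Inl: "\<And>x. \<pi> (Inl x) = Inl (f x)"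
    and \<pi>_Inr: "\<And>y. \<pi> (Inr y) = Inr (g y)"
    using side_preserving_decomp[OF assms(1,3)] by blast
  moreover have "sqs_block \<tau>' (f ` X) (g ` Y)" if "sqs_block \<tau> X Y" for X Y
  proof -
    have "Inl ` X \<union> Inr ` Y \<in> SQS \<tau>"
      using that by (simp only: Inl_Inr_mem_SQS_iff[where \<tau> = \<tau>, OF assms(5)])
    then have "\<pi> ` (Inl ` X \<union> Inr ` Y) \<in> SQS \<tau>'"
      using sqs_sim_iff_mem[OF assms(1)] assms(2) by blast
    moreover have "\<pi> ` (Inl ` X \<union> Inr ` Y) = Inl ` (f ` X) \<union> Inr ` (g ` Y)"
      by (simp add: image_Un image_image \<pi>_Inl \<pi>_Inr)
    ultimately show ?thesis
      by (simp only: Inl_Inr_mem_SQS_iff[where \<tau> = \<tau>', OF assms(6)])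
  qed
  ultimately obtain a A b B where "invertible A" "invertible B" "\<tau>' = conj_perm B \<tau> A"
    and f: "\<And>x. f x = a + A *v x" and g: "\<And>y. g y = b + B *v y"
    using affine_if_preserves_sqs_blocks[where \<tau> = \<tau> and \<tau>' = \<tau>', OF _ _ assms(4-6)] by blast
  moreover have "\<pi> = sigma2 a A b B"
  proof
    show "\<pi> p = sigma2 a A b B p" for p
      by (cases p) (simp_all add: \<pi>_Inl \<pi>_Inr f g)
  qed
  ultimately show ?thesis
    by blast
qed

lemma sqs_sim_classification:
  fixes \<tau> \<tau>' :: "bit ^ 'n::finite \<Rightarrow> bit ^ 'n"
  assumes "bij \<tau>" "\<tau> 0 = 0" "\<not> Modules.additive \<tau>"
    and "bij \<tau>'" "\<tau>' 0 = 0" "\<not> Modules.additive \<tau>'"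
    and "bij \<pi>" "sqs_sim \<pi> \<tau> \<tau>'"
  shows "(\<exists>a A b B. invertible A \<and> invertible B \<and> \<pi> = sigma2 a A b B \<and> \<tau>' = conj_perm B \<tau> A)
    \<or> (\<exists>a A b B. invertible A \<and> invertible B \<and> \<pi> = sigma2 a A b B \<circ> xi \<and> \<tau>' = conj_perm B (inv \<tau>) A)"
  using sqs_sim_preserves_or_swaps_sides[OF assms(7,8,1-6)]
proof
  assume "\<forall>p. isl (\<pi> p) = isl p"
  then show ?thesis
    using side_preserving_sqs_sim_eq_sigma2[OF assms(7,8) _ assms(1,2,5)] by blast
next
  assume swaps: "\<forall>p. isl (\<pi> p) \<noteq> isl p"
  have "sqs_sim xi (inv \<tau>) \<tau>"
    using sqs_sim_xi[OF bij_imp_bij_inv[OF assms(1)] inv_zero[OF assms(1,2)]] assms(1)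
    by (simp add: inv_inv_eq)
  then have "sqs_sim (\<pi> \<circ> xi) (inv \<tau>) \<tau>'"
    using assms(8) by (rule sqs_sim_comp)
  moreover have "\<forall>p. isl ((\<pi> \<circ> xi) p) = isl p"
    using swaps by (auto simp: xi_def split: sum.split)
  ultimately obtain a A b B where "invertible A" "invertible B" "\<pi> \<circ> xi = sigma2 a A b B"
    and "\<tau>' = conj_perm B (inv \<tau>) A"
    using side_preserving_sqs_sim_eq_sigma2[OF bij_comp[OF bij_xi assms(7)]] bij_imp_bij_inv[OF assms(1)]
      inv_zero[OF assms(1,2)] assms(5) by blast
  moreover have "\<pi> = (\<pi> \<circ> xi) \<circ> xi"
    by (simp add: fun_eq_iff)
  ultimately show ?thesis
    by (intro disjI2) auto
qed

section \<open>Affine systems\<close>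

lemma hamming_sqs_eq: "hamming_sqs = {S :: (bit ^ 'm::finite) set. card S = 4 \<and> \<Sum>S = 0}"
proof (intro set_eqI iffI)
  fix S :: "(bit ^ 'm) set"
  assume "S \<in> hamming_sqs"
  then obtain c where c: "c \<in> ext_hamming_code" and S: "S = {x. c x \<noteq> 0}" and "card S = 4"
    unfolding hamming_sqs_def by blast
  have "(\<Sum>x\<in>UNIV. c x *s x) = (\<Sum>x\<in>S. c x *s x)"
    by (rule sum.mono_neutral_right) (auto simp: S)
  also have "\<dots> = \<Sum>S"
    by (simp add: S)
  finally show "S \<in> {S. card S = 4 \<and> \<Sum>S = 0}"
    using c \<open>card S = 4\<close> unfolding ext_hamming_code_def by simp
next
  fix S :: "(bit ^ 'm) set"
  assume "S \<in> {S. card S = 4 \<and> \<Sum>S = 0}"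
  then have S: "card S = 4" "\<Sum>S = 0" by auto
  define c where "c x = (if x \<in> S then 1 else (0::bit))" for x
  have "(\<Sum>x\<in>UNIV. c x) = of_nat (card S)"
    by (subst sum.mono_neutral_cong_right[of UNIV S]) (auto simp: c_def)
  moreover have "(\<Sum>x\<in>UNIV. c x *s x) = \<Sum>S"
    by (rule sum.mono_neutral_cong_right) (auto simp: c_def)
  ultimately have "c \<in> ext_hamming_code"
    using S unfolding ext_hamming_code_def by (simp add: of_nat_bit)
  moreover have "S = {x. c x \<noteq> 0}"
    by (auto simp: c_def)
  ultimately show "S \<in> hamming_sqs"
    unfolding hamming_sqs_def using S by blast
qed

definition vec_extend :: "bit ^ 'n \<Rightarrow> bit \<Rightarrow> bit ^ 'n option" where
  "vec_extend v t = (\<chi> i. case i of None \<Rightarrow> t | Some j \<Rightarrow> v $ j)"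

lemma vec_extend_eq_iff [simp]: "vec_extend v t = vec_extend v' t' \<longleftrightarrow> v = v' \<and> t = t'"
proof
  assume "vec_extend v t = vec_extend v' t'"
  then have "vec_extend v t $ i = vec_extend v' t' $ i" for i
    by simp
  from this[of None] this[of "Some _"] show "v = v' \<and> t = t'"
    by (simp add: vec_extend_def vec_eq_iff)
qed simp

lemma vec_extend_surj: "\<exists>v t. w = vec_extend v t"
proof (intro exI)
  show "w = vec_extend (\<chi> j. w $ Some j) (w $ None)"
    by (simp add: vec_extend_def vec_eq_iff split: option.split)
qed

lemma vec_extend_eq_0_iff: "vec_extend v t = 0 \<longleftrightarrow> v = 0 \<and> t = 0"
  by (auto simp: vec_extend_def vec_eq_iff split: option.split)

lemma vec_extend_add: "vec_extend v t + vec_extend v' t' = vec_extend (v + v') (t + t')"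
  by (simp add: vec_extend_def vec_eq_iff split: option.split)

lemma sum_vec_extend: "(\<Sum>x\<in>S. vec_extend (f x) (g x)) = vec_extend (sum f S) (sum g S)"
  by (simp add: vec_extend_def vec_eq_iff split: option.split)

lemma sqs_block_additive_iff:
  fixes \<tau> :: "bit ^ 'n::finite \<Rightarrow> bit ^ 'n"
  assumes "Modules.additive \<tau>" "inj \<tau>"
  shows "sqs_block \<tau> X Y \<longleftrightarrow> card X + card Y = 4 \<and> even (card Y) \<and> \<tau> (\<Sum>X) = \<Sum>Y"
proof -
  have \<tau>0: "\<tau> 0 = 0"
    by (rule Modules.additive.zero[OF assms(1)])
  have \<tau>_eq_0_iff: "\<tau> u = 0 \<longleftrightarrow> u = 0" for u
    using inj_eq[OF assms(2), of u 0] \<tau>0 by simp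
  show ?thesis
  proof
    assume "sqs_block \<tau> X Y"
    then show "card X + card Y = 4 \<and> even (card Y) \<and> \<tau> (\<Sum>X) = \<Sum>Y"
      unfolding sqs_block_def using \<tau>0 by auto
  next
    assume *: "card X + card Y = 4 \<and> even (card Y) \<and> \<tau> (\<Sum>X) = \<Sum>Y"
    then have "even (card Y)" "card Y \<le> 4"
      by simp_all
    then have "card Y = 0 \<or> card Y = 2 \<or> card Y = 4"
      by presburger
    then show "sqs_block \<tau> X Y"
    proof (elim disjE)
      assume "card Y = 0"
      then have "Y = {}" "card X = 4" "\<tau> (\<Sum>X) = 0"
        using * by simp_all
      then show ?thesis
        by (simp add: \<tau>_eq_0_iff)
    next
      assume "card Y = 2"
      with * show ?thesis
        by (simp add: sqs_block_def)
    next
      assume "card Y = 4"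
      then have "X = {}"
        using * by simp
      then have "\<Sum>Y = 0"
        using * \<tau>0 by simp
      with \<open>X = {}\<close> \<open>card Y = 4\<close> show ?thesis
        by simp
    qed
  qed
qed

definition sqs_embedding :: "(bit ^ 'n \<Rightarrow> bit ^ 'n) \<Rightarrow> 'n::finite point \<Rightarrow> bit ^ 'n option" where
  "sqs_embedding \<tau> = case_sum (\<lambda>x. vec_extend (\<tau> x) 0) (\<lambda>y. vec_extend y 1)"

lemma bij_sqs_embedding:
  fixes \<tau> :: "bit ^ 'n::finite \<Rightarrow> bit ^ 'n"
  assumes "bij \<tau>"
  shows "bij (sqs_embedding \<tau>)"
proof -
  have "inj (sqs_embedding \<tau>)"
  proof (rule injI)
    fix p q
    assume "sqs_embedding \<tau> p = sqs_embedding \<tau> q"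
    then show "p = q"
      using assms by (cases p; cases q) (simp_all add: sqs_embedding_def bij_is_inj inj_eq)
  qed
  moreover have "\<exists>p. w = sqs_embedding \<tau> p" for w
  proof -
    obtain v t where w: "w = vec_extend v t"
      using vec_extend_surj by blast
    show ?thesis
    proof (cases "t = 0")
      case True
      then have "w = sqs_embedding \<tau> (Inl (inv \<tau> v))"
        using assms by (simp add: w sqs_embedding_def bij_is_surj surj_f_inv_f)
      then show ?thesis ..
    next
      case False
      then have "w = sqs_embedding \<tau> (Inr v)"
        by (simp add: w sqs_embedding_def)
      then show ?thesis ..
    qed
  qed
  ultimately show ?thesis
    by (simp add: bij_def surj_def)
qed

lemma mem_SQS_iff_sqs_embedding_mem_hamming_sqs:
  fixes \<tau> :: "bit ^ 'n::finite \<Rightarrow> bit ^ 'n"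
  assumes "bij \<tau>" "Modules.additive \<tau>"
  shows "P \<in> SQS \<tau> \<longleftrightarrow> sqs_embedding \<tau> ` P \<in> hamming_sqs"
proof -
  define X Y where "X = Inl -` P" and "Y = Inr -` P"
  have P: "P = Inl ` X \<union> Inr ` Y"
    unfolding X_def Y_def by (rule Inl_Inr_vimage_decomp)
  have disj: "Inl ` X \<inter> Inr ` Y = {}"
    by auto
  have inj: "inj (sqs_embedding \<tau>)"
    using bij_sqs_embedding[OF assms(1)] by (rule bij_is_inj)
  have card: "card (sqs_embedding \<tau> ` P) = card X + card Y"
    using inj unfolding P by (simp add: card_image inj_on_subset card_Un_disjoint[OF _ _ disj])
  have "\<Sum>(sqs_embedding \<tau> ` P) = sum (sqs_embedding \<tau>) (Inl ` X) + sum (sqs_embedding \<tau>) (Inr ` Y)"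
    using inj unfolding P by (simp add: sum.reindex inj_on_subset sum.union_disjoint[OF _ _ disj])
  also have "\<dots> = (\<Sum>x\<in>X. vec_extend (\<tau> x) 0) + (\<Sum>y\<in>Y. vec_extend y 1)"
    by (simp add: sum.reindex sqs_embedding_def)
  also have "\<dots> = vec_extend (\<tau> (\<Sum>X) + \<Sum>Y) (of_nat (card Y))"
    by (simp add: sum_vec_extend vec_extend_add Modules.additive.sum[OF assms(2)])
  finally have sum: "\<Sum>(sqs_embedding \<tau> ` P) = vec_extend (\<tau> (\<Sum>X) + \<Sum>Y) (of_nat (card Y))" .
  have "P \<in> SQS \<tau> \<longleftrightarrow> sqs_block \<tau> X Y"
    unfolding X_def Y_def by (rule mem_SQS_iff[where \<tau> = \<tau>, OF Modules.additive.zero[OF assms(2)]])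
  also have "\<dots> \<longleftrightarrow> card X + card Y = 4 \<and> even (card Y) \<and> \<tau> (\<Sum>X) = \<Sum>Y"
    by (rule sqs_block_additive_iff[OF assms(2) bij_is_inj[OF assms(1)]])
  also have "\<dots> \<longleftrightarrow> sqs_embedding \<tau> ` P \<in> hamming_sqs"
    by (simp add: hamming_sqs_eq card sum vec_extend_eq_0_iff vec_bit_add_eq_0_iff of_nat_bit)
  finally show ?thesis .
qed

lemma additive_imp_affine_SQS:
  fixes \<tau> :: "bit ^ 'n::finite \<Rightarrow> bit ^ 'n"
  assumes "bij \<tau>" "Modules.additive \<tau>"
  shows "affine_SQS \<tau>"
proof -
  have "(\<lambda>B. sqs_embedding \<tau> ` B) ` SQS \<tau> = hamming_sqs"
    unfolding image_sets_eq_iff[OF bij_sqs_embedding[OF assms(1)]]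
    using mem_SQS_iff_sqs_embedding_mem_hamming_sqs[OF assms] by simp
  with bij_sqs_embedding[OF assms(1)] show ?thesis
    unfolding affine_SQS_def by blast
qed

lemma affine_SQS_if_sqs_sim:
  fixes \<tau> \<tau>' :: "bit ^ 'n::finite \<Rightarrow> bit ^ 'n"
  assumes "bij \<pi>" "sqs_sim \<pi> \<tau> \<tau>'" "affine_SQS \<tau>'"
  shows "affine_SQS \<tau>"
proof -
  obtain \<phi> :: "'n point \<Rightarrow> bit ^ 'n option"
    where "bij \<phi>" and \<phi>: "(\<lambda>B. \<phi> ` B) ` SQS \<tau>' = hamming_sqs"
    using assms(3) unfolding affine_SQS_def by blast
  have "bij (\<phi> \<circ> \<pi>)"
    using assms(1) \<open>bij \<phi>\<close> by (rule bij_comp)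
  moreover have "(\<lambda>B. (\<phi> \<circ> \<pi>) ` B) ` SQS \<tau> = hamming_sqs"
    using assms(2) \<phi> unfolding sqs_sim_def image_sets_comp by simp
  ultimately show ?thesis
    unfolding affine_SQS_def by blast
qed

lemma affine_SQS_sqs_sim_iff:
  fixes \<tau> \<tau>' :: "bit ^ 'n::finite \<Rightarrow> bit ^ 'n"
  assumes "bij \<pi>" "sqs_sim \<pi> \<tau> \<tau>'"
  shows "affine_SQS \<tau> \<longleftrightarrow> affine_SQS \<tau>'"
  using affine_SQS_if_sqs_sim[OF assms] affine_SQS_if_sqs_sim[OF bij_imp_bij_inv[OF assms(1)] sqs_sim_inv[OF assms]]
  by blast

lemma affine_SQS_isomorphic:
  fixes \<tau> \<tau>' :: "bit ^ 'n::finite \<Rightarrow> bit ^ 'n"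
  assumes "affine_SQS \<tau>" "affine_SQS \<tau>'"
  shows "\<exists>\<pi>. bij \<pi> \<and> sqs_sim \<pi> \<tau> \<tau>'"
proof -
  obtain \<phi> \<phi>' :: "'n point \<Rightarrow> bit ^ 'n option"
    where "bij \<phi>" "(\<lambda>B. \<phi> ` B) ` SQS \<tau> = hamming_sqs"
      and \<phi>': "bij \<phi>'" "(\<lambda>B. \<phi>' ` B) ` SQS \<tau>' = hamming_sqs"
    using assms unfolding affine_SQS_def by blast
  moreover have "(\<lambda>B. inv \<phi>' ` B) ` hamming_sqs = SQS \<tau>'"
    by (rule image_sets_inv[OF \<phi>'])
  ultimately have "bij (inv \<phi>' \<circ> \<phi>) \<and> sqs_sim (inv \<phi>' \<circ> \<phi>) \<tau> \<tau>'"
    unfolding sqs_sim_def image_sets_comp by (simp add: bij_comp bij_imp_bij_inv)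
  then show ?thesis
    by blast
qed

lemma non_affine_sqs_sim_iff:
  fixes \<tau> \<tau>' :: "bit ^ 'n::finite \<Rightarrow> bit ^ 'n"
  assumes "bij \<tau>" "\<tau> 0 = 0" "bij \<tau>'" "\<tau>' 0 = 0"
    and "\<not> affine_SQS \<tau> \<or> \<not> affine_SQS \<tau>'" and "bij \<pi>"
  shows "sqs_sim \<pi> \<tau> \<tau>' \<longleftrightarrow>
      (\<exists>a A b B. invertible A \<and> invertible B \<and> \<pi> = sigma2 a A b B \<and> \<tau>' = conj_perm B \<tau> A)
    \<or> (\<exists>a A b B. invertible A \<and> invertible B \<and> \<pi> = sigma2 a A b B \<circ> xi \<and> \<tau>' = conj_perm B (inv \<tau>) A)"
proof
  assume sim: "sqs_sim \<pi> \<tau> \<tau>'"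
  then have "\<not> affine_SQS \<tau>" "\<not> affine_SQS \<tau>'"
    using assms(5) affine_SQS_sqs_sim_iff[OF assms(6)] by blast+
  then have "\<not> Modules.additive \<tau>" "\<not> Modules.additive \<tau>'"
    using additive_imp_affine_SQS assms(1,3) by blast+
  then show "(\<exists>a A b B. invertible A \<and> invertible B \<and> \<pi> = sigma2 a A b B \<and> \<tau>' = conj_perm B \<tau> A)
    \<or> (\<exists>a A b B. invertible A \<and> invertible B \<and> \<pi> = sigma2 a A b B \<circ> xi \<and> \<tau>' = conj_perm B (inv \<tau>) A)"
    by (intro sqs_sim_classification assms(1-4,6) sim)
next
  assume "(\<exists>a A b B. invertible A \<and> invertible B \<and> \<pi> = sigma2 a A b B \<and> \<tau>' = conj_perm B \<tau> A)
    \<or> (\<exists>a A b B. invertible A \<and> invertible B \<and> \<pi> = sigma2 a A b B \<circ> xi \<and> \<tau>' = conj_perm B (inv \<tau>) A)"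
  then show "sqs_sim \<pi> \<tau> \<tau>'"
    using sqs_sim_sigma2[where \<tau> = \<tau>, OF _ _ assms(2)] sqs_sim_sigma2_xi[OF _ _ assms(1,2)] by auto
qed

theorem theorem1:
  fixes \<tau> \<tau>' :: "bit ^ 'n::finite \<Rightarrow> bit ^ 'n"
  assumes "bij \<tau>" and "\<tau> 0 = 0" and "bij \<tau>'" and "\<tau>' 0 = 0"
  shows "(affine_SQS \<tau> \<and> affine_SQS \<tau>' \<longrightarrow> (\<exists>\<pi>. bij \<pi> \<and> sqs_sim \<pi> \<tau> \<tau>'))
    \<and> (\<not> affine_SQS \<tau> \<or> \<not> affine_SQS \<tau>' \<longrightarrow>
        (\<forall>\<pi>. bij \<pi> \<longrightarrow>
          (sqs_sim \<pi> \<tau> \<tau>' \<longleftrightarrow>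
            (\<exists>a A b B. invertible A \<and> invertible B \<and> \<pi> = sigma2 a A b B \<and> \<tau>' = conj_perm B \<tau> A)
          \<or> (\<exists>a A b B. invertible A \<and> invertible B \<and> \<pi> = sigma2 a A b B \<circ> xi \<and> \<tau>' = conj_perm B (inv \<tau>) A))))
    \<and> (\<forall>(\<rho>::bit ^ 'n \<Rightarrow> bit ^ 'n) a A b B. bij \<rho> \<and> \<rho> 0 = 0 \<and> invertible A \<and> invertible B \<longrightarrow>
        sqs_sim (sigma2 a A b B) \<rho> (conj_perm B \<rho> A)
        \<and> sqs_sim (sigma2 a A b B \<circ> xi) \<rho> (conj_perm B (inv \<rho>) A))"
proof (intro conjI impI allI)
  show "\<exists>\<pi>. bij \<pi> \<and> sqs_sim \<pi> \<tau> \<tau>'" if "affine_SQS \<tau> \<and> affine_SQS \<tau>'"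
    using that affine_SQS_isomorphic by blast
next
  fix \<pi> :: "'n point \<Rightarrow> 'n point"
  assume "\<not> affine_SQS \<tau> \<or> \<not> affine_SQS \<tau>'" and "bij \<pi>"
  then show "sqs_sim \<pi> \<tau> \<tau>' \<longleftrightarrow>
      (\<exists>a A b B. invertible A \<and> invertible B \<and> \<pi> = sigma2 a A b B \<and> \<tau>' = conj_perm B \<tau> A)
    \<or> (\<exists>a A b B. invertible A \<and> invertible B \<and> \<pi> = sigma2 a A b B \<circ> xi \<and> \<tau>' = conj_perm B (inv \<tau>) A)"
    by (rule non_affine_sqs_sim_iff[OF assms])
next
  fix \<rho> :: "bit ^ 'n \<Rightarrow> bit ^ 'n" and a b :: "bit ^ 'n" and A B :: "bit ^ 'n ^ 'n"
  assume "bij \<rho> \<and> \<rho> 0 = 0 \<and> invertible A \<and> invertible B"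
  then show "sqs_sim (sigma2 a A b B) \<rho> (conj_perm B \<rho> A)"
    and "sqs_sim (sigma2 a A b B \<circ> xi) \<rho> (conj_perm B (inv \<rho>) A)"
    by (simp_all add: sqs_sim_sigma2 sqs_sim_sigma2_xi)
qed

end
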